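(* Let $p$ be a prime and let $G$ be a finite top $p$-group such that $Z(G)$ and $G/G'$ are elementary abelian. Then $G$ is the direct product of a special $p$-group and an abelian group.
   Context: For a group $H$, $H'$ denotes its commutator subgroup and $Z(H)$ its center. A finite group $G$ is top if $|H/H'| < |G/G'|$ for every proper subgroup $H<G$. A finite $p$-group $P$ is special if $P' = Z(P) = \Phi(P)$, where $\Phi(P)$ is the Frattini subgroup of $P$. *)

theory Defs
  imports "HOL-Algebra.Algebra"
begin

definition commutator_subgroup :: "('a, 'b) monoid_scheme \<Rightarrow> 'a set" where
  "commutator_subgroup H = derived H (carrier H)"

definition center :: "('a, 'b) monoid_scheme \<Rightarrow> 'a set" where
  "center H = {z \<in> carrier H. \<forall>g \<in> carrier H. z \<otimes>\<^bsub>H\<^esub> g = g \<otimes>\<^bsub>H\<^esub> z}"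

definition maximal_subgroup :: "'a set \<Rightarrow> ('a, 'b) monoid_scheme \<Rightarrow> bool" where
  "maximal_subgroup M H \<longleftrightarrow> subgroup M H \<and> M \<noteq> carrier H \<and>
     (\<forall>K. subgroup K H \<and> M \<subseteq> K \<longrightarrow> K = M \<or> K = carrier H)"

definition frattini :: "('a, 'b) monoid_scheme \<Rightarrow> 'a set" where
  "frattini H = carrier H \<inter> \<Inter> {M. maximal_subgroup M H}"

definition p_group :: "nat \<Rightarrow> ('a, 'b) monoid_scheme \<Rightarrow> bool" where
  "p_group p H \<longleftrightarrow> group H \<and> finite (carrier H) \<and> (\<exists>n. card (carrier H) = p ^ n)"

definition elementary_abelian :: "nat \<Rightarrow> ('a, 'b) monoid_scheme \<Rightarrow> bool" where
  "elementary_abelian p H \<longleftrightarrow> comm_group H \<and> (\<forall>x \<in> carrier H. x [^]\<^bsub>H\<^esub> p = \<one>\<^bsub>H\<^esub>)"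

definition abelianization :: "('a, 'b) monoid_scheme \<Rightarrow> 'a set monoid" where
  "abelianization H = H Mod commutator_subgroup H"

definition top_group :: "('a, 'b) monoid_scheme \<Rightarrow> bool" where
  "top_group G \<longleftrightarrow> group G \<and> finite (carrier G) \<and>
     (\<forall>H. subgroup H G \<and> H \<subset> carrier G \<longrightarrow>
        order (abelianization (G\<lparr>carrier := H\<rparr>)) < order (abelianization G))"

definition special_p_group :: "nat \<Rightarrow> ('a, 'b) monoid_scheme \<Rightarrow> bool" where
  "special_p_group p P \<longleftrightarrow> p_group p P \<and>
     commutator_subgroup P = center P \<and> center P = frattini P"

end

theory Submission
  imports Defs
begin

text \<open>If \<open>G'\<close> were not central, choose \<open>N \<lhd> G\<close> maximal inside \<open>G'\<close> with \<open>[G, G'] \<nsubseteq> N\<close>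
  and \<open>u \<in> G'\<close> of order \<open>p\<close> in \<open>Z(G/N)\<close>; maximality gives \<open>[G, G'] \<le> N\<langle>u\<rangle>\<close>. For the proper
  subgroup \<open>C = C\<^sub>G(G'/N)\<close> this yields \<open>|G : C| \<le> |G' : G' \<inter> Z(G/N)|\<close>, while the three
  subgroups lemma gives \<open>C' \<le> G' \<inter> Z(G/N)\<close>; together \<open>|C/C'| \<ge> |G/G'|\<close>, contradicting topness.
  So \<open>G' \<le> Z(G)\<close>. As \<open>Z(G)\<close> and \<open>G/G'\<close> are elementary abelian, a subgroup \<open>A\<close> maximal
  among those of \<open>Z(G)\<close> meeting \<open>G'\<close> trivially satisfies \<open>Z(G) = A G'\<close>, and a subgroup
  \<open>S \<ge> G'\<close> maximal with \<open>S \<inter> A = 1\<close> satisfies \<open>G = S A\<close>. Since \<open>A\<close> is central, \<open>S' = G'\<close>,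
  \<open>Z(S) = S \<inter> Z(G) = G'\<close>, and \<open>\<Phi>(S) = G'\<close> because \<open>S/G'\<close> is elementary abelian and the
  central subgroup \<open>S'\<close> lies in every maximal subgroup.\<close>

definition commutator :: "('a, 'b) monoid_scheme \<Rightarrow> 'a \<Rightarrow> 'a \<Rightarrow> 'a" where
  "commutator G a b = a \<otimes>\<^bsub>G\<^esub> b \<otimes>\<^bsub>G\<^esub> inv\<^bsub>G\<^esub> a \<otimes>\<^bsub>G\<^esub> inv\<^bsub>G\<^esub> b"

text \<open>The preimage in \<open>G\<close> of the centralizer of \<open>K N / N\<close> in \<open>G / N\<close>.\<close>
definition centralizer_mod :: "('a, 'b) monoid_scheme \<Rightarrow> 'a set \<Rightarrow> 'a set \<Rightarrow> 'a set" where
  "centralizer_mod G N K = {g \<in> carrier G. \<forall>k\<in>K. commutator G g k \<in> N}"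

section \<open>Commutators and central elements\<close>

context group begin

lemma mult_inv_cancel_left [simp]:
  "x \<in> carrier G \<Longrightarrow> y \<in> carrier G \<Longrightarrow> x \<otimes> (inv x \<otimes> y) = y"
  by (simp add: m_assoc [symmetric])

lemma inv_mult_cancel_left [simp]:
  "x \<in> carrier G \<Longrightarrow> y \<in> carrier G \<Longrightarrow> inv x \<otimes> (x \<otimes> y) = y"
  by (simp add: m_assoc [symmetric])

lemma commutator_closed [simp]:
  "a \<in> carrier G \<Longrightarrow> b \<in> carrier G \<Longrightarrow> commutator G a b \<in> carrier G"
  by (simp add: commutator_def)

lemma inv_commutator:
  "a \<in> carrier G \<Longrightarrow> b \<in> carrier G \<Longrightarrow> inv (commutator G a b) = commutator G b a"
  by (simp add: commutator_def m_assoc inv_mult_group)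

lemma commutator_mult_left:
  "g \<in> carrier G \<Longrightarrow> h \<in> carrier G \<Longrightarrow> d \<in> carrier G \<Longrightarrow>
   commutator G (g \<otimes> h) d = (g \<otimes> commutator G h d \<otimes> inv g) \<otimes> commutator G g d"
  by (simp add: commutator_def m_assoc inv_mult_group)

lemma commutator_inv_left:
  "g \<in> carrier G \<Longrightarrow> d \<in> carrier G \<Longrightarrow>
   commutator G (inv g) d = inv g \<otimes> inv (commutator G g d) \<otimes> g"
  by (simp add: commutator_def m_assoc inv_mult_group)

lemma conj_eq_commutator_mult:
  "g \<in> carrier G \<Longrightarrow> d \<in> carrier G \<Longrightarrow> g \<otimes> d \<otimes> inv g = commutator G g d \<otimes> d"
  by (simp add: commutator_def m_assoc)

lemma commutator_eq_one_iff:
  assumes "a \<in> carrier G" "b \<in> carrier G"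
  shows "commutator G a b = \<one> \<longleftrightarrow> a \<otimes> b = b \<otimes> a"
proof -
  have "commutator G a b = (a \<otimes> b) \<otimes> inv (b \<otimes> a)"
    using assms by (simp add: commutator_def m_assoc inv_mult_group)
  then show ?thesis
    using assms by (simp add: inv_solve_right')
qed

lemma hall_witt_identity:
  assumes "a \<in> carrier G" "b \<in> carrier G" "z \<in> carrier G"
  shows "(inv a \<otimes> commutator G (commutator G a b) z \<otimes> a) \<otimes>
         (z \<otimes> commutator G (commutator G (inv z) (inv a)) b \<otimes> inv z) \<otimes>
         (b \<otimes> commutator G (commutator G (inv b) z) (inv a) \<otimes> inv b) = \<one>"
  using assms by (simp add: commutator_def m_assoc inv_mult_group)

lemma derived_set_eq_commutators:
  "derived_set G H = {commutator G a b | a b. a \<in> H \<and> b \<in> H}"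
  unfolding commutator_def by blast

lemma commutator_in_derived:
  "a \<in> H \<Longrightarrow> b \<in> H \<Longrightarrow> commutator G a b \<in> derived G H"
  unfolding derived_def derived_set_eq_commutators by (blast intro: generate.incl)

lemma commutator_mem_subgroup:
  "subgroup H G \<Longrightarrow> a \<in> H \<Longrightarrow> b \<in> H \<Longrightarrow> commutator G a b \<in> H"
  unfolding commutator_def by (simp add: subgroup.m_closed subgroup.m_inv_closed)

lemma commutator_mem_swap:
  assumes "subgroup N G" "a \<in> carrier G" "b \<in> carrier G"
  shows "commutator G a b \<in> N \<longleftrightarrow> commutator G b a \<in> N"
  using assms subgroup.m_inv_closed inv_commutator by metis

lemma center_subgroup: "subgroup (center G) G"
proof (rule subgroupI)
  show "center G \<subseteq> carrier G" "center G \<noteq> {}"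
    unfolding center_def by auto
next
  fix a assume a: "a \<in> center G"
  have "inv a \<otimes> g = g \<otimes> inv a" if g: "g \<in> carrier G" for g
  proof -
    have ac: "a \<in> carrier G" and "a \<otimes> g = g \<otimes> a" using a g unfolding center_def by auto
    then have "inv a \<otimes> (a \<otimes> g) \<otimes> inv a = inv a \<otimes> (g \<otimes> a) \<otimes> inv a" by simp
    then show ?thesis using ac g by (simp add: m_assoc)
  qed
  then show "inv a \<in> center G"
    using a unfolding center_def by auto
next
  fix a b assume "a \<in> center G" "b \<in> center G"
  then have ac: "a \<in> carrier G" and bc: "b \<in> carrier G"
    and a: "\<And>g. g \<in> carrier G \<Longrightarrow> a \<otimes> g = g \<otimes> a"
    and b: "\<And>g. g \<in> carrier G \<Longrightarrow> b \<otimes> g = g \<otimes> b"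
    unfolding center_def by auto
  have "a \<otimes> b \<otimes> g = g \<otimes> (a \<otimes> b)" if g: "g \<in> carrier G" for g
  proof -
    have "a \<otimes> b \<otimes> g = a \<otimes> g \<otimes> b" using ac bc g b[OF g] by (simp add: m_assoc)
    also have "\<dots> = g \<otimes> (a \<otimes> b)" using ac bc g a[OF g] by (simp add: m_assoc)
    finally show ?thesis .
  qed
  then show "a \<otimes> b \<in> center G"
    using ac bc unfolding center_def by auto
qed

lemma commutator_central_left:
  assumes "a \<in> center G" "d \<in> carrier G"
  shows "commutator G a d = \<one>"
  using assms commutator_eq_one_iff unfolding center_def by auto

lemma commutator_mult_central_left:
  assumes "x \<in> carrier G" "a \<in> center G" "d \<in> carrier G"
  shows "commutator G (x \<otimes> a) d = commutator G x d"
proof -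
  have "a \<in> carrier G" using assms(2) unfolding center_def by auto
  then show ?thesis
    using assms commutator_mult_left[of x a d] commutator_central_left by (simp add: m_assoc)
qed

lemma commutator_mult_central:
  assumes "x \<in> carrier G" "y \<in> carrier G" "a \<in> center G" "b \<in> center G"
  shows "commutator G (x \<otimes> a) (y \<otimes> b) = commutator G x y"
proof -
  have "a \<in> carrier G" "b \<in> carrier G" using assms(3,4) unfolding center_def by auto
  then have "commutator G (y \<otimes> b) (x \<otimes> a) = commutator G y x"
    using assms commutator_mult_central_left commutator_closed inv_commutator
    by (metis m_closed)
  then show ?thesis
    using assms \<open>a \<in> carrier G\<close> \<open>b \<in> carrier G\<close>
    by (metis inv_commutator m_closed)
qed

lemma normal_if_subset_center:
  assumes "subgroup A G" "A \<subseteq> center G" shows "A \<lhd> G"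
  unfolding normal_inv_iff
proof (intro conjI assms ballI)
  fix g a assume g: "g \<in> carrier G" and a: "a \<in> A"
  have ac: "a \<in> carrier G" and "a \<otimes> g = g \<otimes> a" using a g assms(2) unfolding center_def by auto
  then have "g \<otimes> a \<otimes> inv g = a \<otimes> g \<otimes> inv g" by simp
  then have "g \<otimes> a \<otimes> inv g = a" using ac g by (simp add: m_assoc)
  then show "g \<otimes> a \<otimes> inv g \<in> A" using a by simp
qed

lemma normal_if_derived_subset:
  assumes "subgroup Q G" "derived G (carrier G) \<subseteq> Q"
  shows "Q \<lhd> G"
  unfolding normal_inv_iff
proof (intro conjI assms ballI)
  fix g h assume g: "g \<in> carrier G" and h: "h \<in> Q"
  have hc: "h \<in> carrier G" using subgroup.mem_carrier[OF assms(1) h] .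
  have "commutator G g h \<in> Q" using assms(2) commutator_in_derived[OF g hc] by blast
  then show "g \<otimes> h \<otimes> inv g \<in> Q"
    using conj_eq_commutator_mult[OF g hc] subgroup.m_closed[OF assms(1) _ h] by simp
qed

section \<open>Subgroups of finite \<open>p\<close>-groups\<close>

lemma card_subgroup_dvd:
  assumes "subgroup H G" "subgroup K G" "H \<subseteq> K"
  shows "card H dvd card K"
proof -
  interpret K: group "G\<lparr>carrier := K\<rparr>" using assms(2) subgroup_imp_group by blast
  have "subgroup H (G\<lparr>carrier := K\<rparr>)" using subgroup_incl assms by blast
  from K.lagrange[OF this] have "card (rcosets\<^bsub>G\<lparr>carrier := K\<rparr>\<^esub> H) * card H = card K"
    by (simp add: order_def)
  then show ?thesis by (metis dvd_triv_right)
qed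

lemma card_subgroup_prime_power:
  assumes "card (carrier G) = p ^ n" "Factorial_Ring.prime p" "subgroup H G"
  shows "\<exists>k. card H = p ^ k"
  using card_subgroup_dvd[OF assms(3) subgroup_self subgroup.subset[OF assms(3)]] assms(1)
    divides_primepow_nat[OF assms(2)] by auto

lemma prime_mult_card_le_proper_subgroup:
  assumes "finite (carrier G)" "card (carrier G) = p ^ n" "Factorial_Ring.prime p"
    and "subgroup H G" "subgroup K G" "H \<subset> K"
  shows "p * card H \<le> card K"
proof -
  obtain a b where ab: "card H = p ^ a" "card K = p ^ b"
    using card_subgroup_prime_power assms(2-5) by metis
  have "finite K" using assms(1) subgroup.subset[OF assms(5)] finite_subset by blast
  then have "p ^ a < p ^ b" using psubset_card_mono assms(6) ab by metis
  then have "a < b" using prime_gt_1_nat[OF assms(3)] by (metis not_less power_increasing_iff)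
  then have "p ^ Suc a \<le> p ^ b" using prime_gt_1_nat[OF assms(3)] by (intro power_increasing) auto
  then show ?thesis using ab by simp
qed

lemma set_mult_subset_subgroup:
  assumes "subgroup T G" "Q \<subseteq> T" "W \<subseteq> T" shows "Q <#> W \<subseteq> T"
  using assms unfolding set_mult_def by (auto intro: subgroup.m_closed)

lemma subset_set_mult_left:
  assumes "subgroup K G" "Q \<subseteq> carrier G" shows "Q \<subseteq> Q <#> K"
proof
  fix x assume x: "x \<in> Q"
  then have "x \<otimes> \<one> \<in> Q <#> K"
    using subgroup.one_closed[OF assms(1)] unfolding set_mult_def by blast
  then show "x \<in> Q <#> K" using x assms(2) by auto
qed

lemma subset_set_mult_right:
  assumes "subgroup Q G" "K \<subseteq> carrier G" shows "K \<subseteq> Q <#> K"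
proof
  fix x assume x: "x \<in> K"
  then have "\<one> \<otimes> x \<in> Q <#> K"
    using subgroup.one_closed[OF assms(1)] unfolding set_mult_def by blast
  then show "x \<in> Q <#> K" using x assms(2) by auto
qed

lemma mem_set_mult_generate:
  assumes "subgroup Q G" "g \<in> carrier G" shows "g \<in> Q <#> generate G {g}"
  using subset_set_mult_right[OF assms(1) generate_incl[of "{g}"]] assms(2)
  by (auto intro: generate.incl)

lemma nat_pow_mem_subgroup:
  assumes "subgroup H G" "h \<in> H" shows "h [^] (n::nat) \<in> H"
  using subgroup_int_pow_closed[OF assms, of "int n"] by (simp add: int_pow_int)

lemma set_mult_generate_elem:
  assumes "subgroup Q G" "g \<in> carrier G" "g [^] (p::nat) \<in> Q" "p > 0"
    and "z \<in> Q <#> generate G {g}"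
  shows "\<exists>x\<in>Q. \<exists>k<p. z = x \<otimes> g [^] k"
proof -
  obtain x i where x: "x \<in> Q" and z: "z = x \<otimes> g [^] (i::int)"
    using assms(5) generate_pow[OF assms(2)] unfolding set_mult_def by auto
  define q r where "q = i div int p" and "r = i mod int p"
  have r: "0 \<le> r" "r < int p" unfolding r_def using assms(4) by auto
  have "g [^] i = (g [^] p) [^] q \<otimes> g [^] nat r"
  proof -
    have "i = int p * q + r" unfolding q_def r_def by simp
    then have "g [^] i = g [^] (int p * q) \<otimes> g [^] r"
      using int_pow_mult[OF assms(2)] by simp
    then show ?thesis using r int_pow_pow[OF assms(2), of "int p" q] by (simp add: int_pow_int)
  qed
  then have "z = (x \<otimes> (g [^] p) [^] q) \<otimes> g [^] nat r"
    using z x assms(1,2) by (simp add: m_assoc subgroup.mem_carrier)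
  moreover have "x \<otimes> (g [^] p) [^] q \<in> Q"
    using x assms(1,3) by (simp add: subgroup.m_closed subgroup_int_pow_closed)
  ultimately show ?thesis using r by (intro bexI[of _ "x \<otimes> (g [^] p) [^] q"] exI[of _ "nat r"]) auto
qed

lemma mem_subgroup_if_coprime_pow:
  assumes "subgroup T G" "g \<in> carrier G" "Factorial_Ring.prime p" "g [^] (p::nat) \<in> T"
    and "\<not> p dvd k" "g [^] (k::nat) \<in> T"
  shows "g \<in> T"
proof -
  have "coprime k p" using assms(3,5) by (metis coprime_commute prime_imp_coprime)
  moreover have "k \<noteq> 0" using assms(5) by (metis dvd_0_right)
  ultimately obtain a b where "k * a = p * b + 1" using bezout_nat[of k p] by auto
  then have "g [^] (k * a) = g [^] (1::nat) \<otimes> g [^] (p * b)"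
    using nat_pow_mult[OF assms(2), of 1 "p * b"] by simp
  then have "g [^] (k * a) = g \<otimes> (g [^] p) [^] b"
    using assms(2) by (simp add: nat_pow_pow)
  moreover have "g [^] (k * a) \<in> T"
    using nat_pow_mem_subgroup[OF assms(1,6)] assms(2) by (simp add: nat_pow_pow)
  ultimately have "g \<otimes> (g [^] p) [^] b \<in> T" by simp
  moreover have "(g [^] p) [^] b \<in> T" using nat_pow_mem_subgroup[OF assms(1,4)] .
  ultimately have "(g \<otimes> (g [^] p) [^] b) \<otimes> inv ((g [^] p) [^] b) \<in> T"
    using assms(1) by (simp add: subgroup.m_closed subgroup.m_inv_closed)
  then show ?thesis using assms(2) by (simp add: m_assoc)
qed

text \<open>Since \<open>Q\<langle>g\<rangle>\<close> is the union of the cosets \<open>Q g\<^sup>k\<close> with \<open>k < p\<close>, an element of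
  \<open>Q\<langle>g\<rangle> - Q\<close> yields a power \<open>g\<^sup>k\<close> prime to \<open>p\<close>.\<close>
lemma mem_subgroup_if_set_mult_generate_witness:
  assumes "subgroup T G" "subgroup Q G" "Q \<subseteq> T" "g \<in> carrier G"
    and "Factorial_Ring.prime p" "g [^] (p::nat) \<in> Q"
    and "w \<in> Q <#> generate G {g}" "w \<in> T" "w \<notin> Q"
  shows "g \<in> T"
proof -
  obtain x k where x: "x \<in> Q" and k: "k < p" and w: "w = x \<otimes> g [^] k"
    using set_mult_generate_elem[OF assms(2,4,6) prime_gt_0_nat[OF assms(5)] assms(7)] by blast
  have xc: "x \<in> carrier G" using subgroup.mem_carrier[OF assms(2) x] .
  have "k \<noteq> 0"
  proof
    assume "k = 0"
    then have "w = x" using w xc by simp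
    then show False using x assms(9) by blast
  qed
  with k have "\<not> p dvd k" by (meson dvd_imp_le neq0_conv not_le)
  moreover have "g [^] k \<in> T"
  proof -
    have "inv x \<in> T" using subgroup.m_inv_closed[OF assms(1) subsetD[OF assms(3) x]] .
    then have "inv x \<otimes> w \<in> T" using subgroup.m_closed[OF assms(1) _ assms(8)] by blast
    moreover have "g [^] k = inv x \<otimes> w" using w xc assms(4) by (simp add: m_assoc)
    ultimately show ?thesis by simp
  qed
  moreover have "g [^] p \<in> T" using assms(3,6) by blast
  ultimately show ?thesis using mem_subgroup_if_coprime_pow[OF assms(1,4,5)] by blast
qed

lemma finite_subgroup_family_has_maximal:
  assumes "finite (carrier G)" "subgroup H\<^sub>0 G" "P H\<^sub>0"
  obtains H where "subgroup H G" "P H" "H\<^sub>0 \<subseteq> H"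
    "\<And>K. subgroup K G \<Longrightarrow> P K \<Longrightarrow> H \<subseteq> K \<Longrightarrow> K = H"
proof -
  let ?F = "{H. subgroup H G \<and> P H}"
  have "?F \<subseteq> Pow (carrier G)" using subgroup.subset by blast
  then have "finite ?F" using assms(1) finite_subset by blast
  then show ?thesis using finite_has_maximal2[of ?F H\<^sub>0] assms(2,3) that by auto
qed

lemma exists_elem_order_p_mod:
  assumes "card (carrier G) = p ^ n" "subgroup N G" "subgroup F G" "d \<in> F" "d \<notin> N"
  shows "\<exists>u\<in>F. u \<notin> N \<and> u [^] p \<in> N"
proof -
  have dc: "d \<in> carrier G" using subgroup.mem_carrier[OF assms(3,4)] .
  let ?P = "\<lambda>m. d [^] (p ^ m) \<in> N"
  have "?P n" using pow_order_eq_1[OF dc] assms(1) subgroup.one_closed[OF assms(2)]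
    by (simp add: order_def)
  then obtain m where Pm: "?P m" and m_least: "\<And>k. k < m \<Longrightarrow> \<not> ?P k"
    using exists_least_iff[of ?P] by blast
  have "m \<noteq> 0"
  proof
    assume "m = 0"
    then have "d \<in> N" using Pm dc by simp
    then show False using assms(5) by blast
  qed
  then obtain k where k: "m = Suc k" using not0_implies_Suc by blast
  have "(d [^] (p ^ k)) [^] p = d [^] (p ^ m)" using dc k by (simp add: nat_pow_pow mult.commute)
  then show ?thesis using m_least[of k] k Pm nat_pow_mem_subgroup[OF assms(3,4)] by (metis lessI)
qed

end

lemma orbit_eq_singleton_iff:
  assumes "group_action G E \<phi>"
  shows "orbit G \<phi> x = {x} \<longleftrightarrow> (\<forall>g\<in>carrier G. \<phi> g x = x)"
proof -
  have "\<one>\<^bsub>G\<^esub> \<in> carrier G"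
    using assms by (simp add: group_action_def group_hom_def group.is_monoid)
  then show ?thesis unfolding orbit_def by (auto intro!: set_eqI) metis
qed

text \<open>The orbits of a \<open>p\<close>-group have \<open>p\<close>-power size, so only the fixed points of an invariant
  set \<open>Y\<close> contribute to \<open>card Y mod p\<close>.\<close>
lemma card_fixed_points_mod:
  assumes act: "group_action G E \<phi>" and "finite E" "Y \<subseteq> E"
    and inv: "\<And>g x. g \<in> carrier G \<Longrightarrow> x \<in> Y \<Longrightarrow> \<phi> g x \<in> Y"
    and "order G = p ^ n" "Factorial_Ring.prime (p::nat)"
  shows "card Y mod p = card {x\<in>Y. \<forall>g\<in>carrier G. \<phi> g x = x} mod p"
proof -
  let ?B = "orbit G \<phi>"
  let ?F = "{x\<in>Y. \<forall>g\<in>carrier G. \<phi> g x = x}"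
  define Os where "Os = ?B ` Y"
  have finY: "finite Y" using assms(2,3) finite_subset by blast
  have orb_self: "x \<in> ?B x" if "x \<in> Y" for x using group_action.orbit_refl[OF act] that assms(3)
    by blast
  have singleton_orbits: "{B\<in>Os. card B = 1} = (\<lambda>x. {x}) ` ?F"
  proof (rule equalityI; rule subsetI)
    fix B assume "B \<in> {B\<in>Os. card B = 1}"
    then obtain x where x: "x \<in> Y" "B = ?B x" "card (?B x) = 1" unfolding Os_def by auto
    then have "?B x = {x}" using orb_self[OF x(1)] by (metis card_1_singletonE singletonD)
    then show "B \<in> (\<lambda>x. {x}) ` ?F" using x(1,2) orbit_eq_singleton_iff[OF act] by blast
  next
    fix B assume "B \<in> (\<lambda>x. {x}) ` ?F"
    then obtain x where x: "x \<in> ?F" "B = {x}" by blast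
    then have "?B x = {x}" using orbit_eq_singleton_iff[OF act] by blast
    then show "B \<in> {B\<in>Os. card B = 1}" using x unfolding Os_def by force
  qed
  have "pairwise disjnt Os"
  proof -
    have "?B x = ?B y \<or> ?B x \<inter> ?B y = {}" if "x \<in> Y" "y \<in> Y" for x y
      using group_action.disjoint_union[OF act] that assms(3) unfolding orbits_def by blast
    then show ?thesis unfolding pairwise_def disjnt_def Os_def by blast
  qed
  moreover have "\<Union>Os = Y" unfolding Os_def using orb_self inv by (auto simp: orbit_def)
  ultimately have "card Y = sum card Os"
    using card_Union_disjoint finite_subset[OF _ finY] by (metis Union_upper)
  then have "card Y mod p = (\<Sum>B\<in>Os. card B mod p) mod p" by (simp add: mod_sum_eq)
  also have "(\<Sum>B\<in>Os. card B mod p) = (\<Sum>B\<in>Os. if card B = 1 then 1 else 0)"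
  proof (rule sum.cong)
    fix B assume "B \<in> Os"
    then obtain x where "x \<in> Y" "B = ?B x" unfolding Os_def by blast
    then have "card B dvd p ^ n"
      using group_action.orbit_stabilizer_theorem[OF act] assms(3,5)
        by (metis dvd_triv_left subsetD)
    then obtain k where "card B = p ^ k" using divides_primepow_nat[OF assms(6)] by blast
    then show "card B mod p = (if card B = 1 then 1 else 0)"
      using prime_gt_1_nat[OF assms(6)] by (cases k) auto
  qed simp
  also have "\<dots> = card {B\<in>Os. card B = 1}"
    using finY unfolding Os_def by (simp add: sum.inter_filter [symmetric])
  also have "\<dots> = card ?F"
    using singleton_orbits by (simp add: card_image)
  finally show ?thesis by simp
qed

context group begin

lemma conj_r_coset:
  assumes "N \<lhd> G" "g \<in> carrier G" "d \<in> carrier G"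
  shows "g <# (N #> d) #> inv g = N #> (g \<otimes> d \<otimes> inv g)"
proof
  have Nc: "N \<subseteq> carrier G" using normal_imp_subgroup[OF assms(1)] subgroup.subset by blast
  show "g <# (N #> d) #> inv g \<subseteq> N #> (g \<otimes> d \<otimes> inv g)"
  proof
    fix y assume "y \<in> g <# (N #> d) #> inv g"
    then obtain n where n: "n \<in> N" "y = g \<otimes> (n \<otimes> d) \<otimes> inv g"
      unfolding l_coset_def r_coset_def by auto
    then have "y = (g \<otimes> n \<otimes> inv g) \<otimes> (g \<otimes> d \<otimes> inv g)"
      using Nc assms(2,3) by (simp add: m_assoc subsetD)
    moreover have "g \<otimes> n \<otimes> inv g \<in> N" using normal.inv_op_closed2[OF assms(1,2) n(1)] .
    ultimately show "y \<in> N #> (g \<otimes> d \<otimes> inv g)" unfolding r_coset_def by blast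
  qed
  show "N #> (g \<otimes> d \<otimes> inv g) \<subseteq> g <# (N #> d) #> inv g"
  proof
    fix y assume "y \<in> N #> (g \<otimes> d \<otimes> inv g)"
    then obtain n where n: "n \<in> N" "y = n \<otimes> (g \<otimes> d \<otimes> inv g)"
      unfolding r_coset_def by auto
    then have "y = g \<otimes> ((inv g \<otimes> n \<otimes> inv (inv g)) \<otimes> d) \<otimes> inv g"
      using Nc assms(2,3) by (simp add: m_assoc subsetD)
    moreover have "inv g \<otimes> n \<otimes> inv (inv g) \<in> N"
      using normal.inv_op_closed2[OF assms(1) inv_closed[OF assms(2)] n(1)] .
    ultimately show "y \<in> g <# (N #> d) #> inv g" unfolding l_coset_def r_coset_def by blast
  qed
qed

lemma p_dvd_card_r_cosets:
  assumes "finite (carrier G)" "card (carrier G) = p ^ n" "Factorial_Ring.prime p"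
    and "subgroup N G" "subgroup D G" "N \<subset> D"
  shows "p dvd card ((\<lambda>d. N #> d) ` D)"
proof -
  interpret D: group "G\<lparr>carrier := D\<rparr>" using subgroup_imp_group[OF assms(5)] .
  have "rcosets\<^bsub>G\<lparr>carrier := D\<rparr>\<^esub> N = (\<lambda>d. N #> d) ` D"
    unfolding RCOSETS_def r_coset_def by auto
  then have lag: "card ((\<lambda>d. N #> d) ` D) * card N = card D"
    using D.lagrange[OF subgroup_incl[OF assms(4,5)]] assms(6) by (simp add: order_def)
  obtain a where "card D = p ^ a" using card_subgroup_prime_power[OF assms(2,3,5)] by blast
  then obtain c where c: "card ((\<lambda>d. N #> d) ` D) = p ^ c"
    using lag divides_primepow_nat[OF assms(3)] by (metis dvd_triv_left)
  have "finite D" using finite_subset[OF subgroup.subset[OF assms(5)] assms(1)] .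
  then have "card N \<noteq> card D" using assms(6) psubset_card_mono by (metis less_irrefl)
  then have "c \<noteq> 0" using lag c by (metis power_0 mult_1)
  then show ?thesis using c by simp
qed

text \<open>Conjugation permutes the cosets of \<open>N\<close> in \<open>D\<close>; their number is a proper power of \<open>p\<close> and \<open>N\<close>
  itself is fixed, so another fixed coset exists.\<close>
lemma exists_conj_fixed_r_coset:
  assumes "finite (carrier G)" "card (carrier G) = p ^ n" "Factorial_Ring.prime p"
    and "N \<lhd> G" "D \<lhd> G" "N \<subset> D"
  shows "\<exists>d\<in>D. N #> d \<noteq> N \<and> (\<forall>g\<in>carrier G. N #> (g \<otimes> d \<otimes> inv g) = N #> d)"
proof -
  have sN: "subgroup N G" and sD: "subgroup D G" using assms(4,5) normal_imp_subgroup by auto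
  have Nc: "N \<subseteq> carrier G" and Dc: "D \<subseteq> carrier G" using sN sD subgroup.subset by auto
  let ?E = "{H. H \<subseteq> carrier G}"
  let ?\<phi> = "\<lambda>g. \<lambda>H \<in> ?E. g <# H #> inv g"
  define Cos where "Cos = (\<lambda>d. N #> d) ` D"
  have conj: "?\<phi> g (N #> d) = N #> (g \<otimes> d \<otimes> inv g)" if "g \<in> carrier G" "d \<in> D" for g d
  proof -
    have "N #> d \<in> ?E" using that(2) Dc r_coset_subset_G[OF Nc] by blast
    then show ?thesis using conj_r_coset[OF assms(4) that(1)] that(2) Dc by auto
  qed
  define F where "F = {x\<in>Cos. \<forall>g\<in>carrier G. ?\<phi> g x = x}"
  have "card Cos mod p = card F mod p"
    unfolding F_def
  proof (rule card_fixed_points_mod[OF action_by_conjugation_on_power_set])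
    show "finite ?E" using assms(1) by simp
    show "Cos \<subseteq> ?E" unfolding Cos_def using Dc r_coset_subset_G[OF Nc] by blast
    show "?\<phi> g x \<in> Cos" if g: "g \<in> carrier G" and x: "x \<in> Cos" for g x
    proof -
      obtain d where d: "d \<in> D" "x = N #> d" using x unfolding Cos_def by blast
      then show ?thesis
        using conj[OF g d(1)] normal.inv_op_closed2[OF assms(5) g d(1)] unfolding Cos_def by auto
    qed
  qed (use assms(2,3) in \<open>simp_all add: order_def\<close>)
  then have "p dvd card F"
    using p_dvd_card_r_cosets[OF assms(1-3) sN sD assms(6)] unfolding Cos_def
    by (simp add: mod_eq_0_iff_dvd [symmetric])
  moreover have "N \<in> F"
  proof -
    have one: "\<one> \<in> D" using subgroup.one_closed[OF sD] .
    have N1: "N #> \<one> = N" using coset_mult_one[OF Nc] .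
    then have "N \<in> Cos" unfolding Cos_def using one by (metis image_eqI)
    moreover have "?\<phi> g N = N" if "g \<in> carrier G" for g
      using conj[OF that one] N1 that by simp
    ultimately show ?thesis unfolding F_def by blast
  qed
  moreover have "finite F"
    using finite_subset[OF Dc assms(1)] unfolding F_def Cos_def by simp
  ultimately have "p \<le> card F" using dvd_imp_le card_0_eq by blast
  then have "\<not> F \<subseteq> {N}"
    using prime_gt_1_nat[OF assms(3)] card_mono[of "{N}" F] by auto
  then show ?thesis using conj unfolding F_def Cos_def by auto
qed

lemma exists_central_elem_mod:
  assumes "finite (carrier G)" "card (carrier G) = p ^ n" "Factorial_Ring.prime p"
    and "N \<lhd> G" "D \<lhd> G" "N \<subset> D"
  shows "\<exists>d\<in>D. d \<notin> N \<and> (\<forall>g\<in>carrier G. commutator G g d \<in> N)"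
proof -
  have sN: "subgroup N G" using normal_imp_subgroup[OF assms(4)] .
  obtain d where d: "d \<in> D" "N #> d \<noteq> N"
    and fixed: "\<And>g. g \<in> carrier G \<Longrightarrow> N #> (g \<otimes> d \<otimes> inv g) = N #> d"
    using exists_conj_fixed_r_coset[OF assms] by blast
  have dc: "d \<in> carrier G" using d(1) normal_imp_subgroup[OF assms(5)] subgroup.subset by blast
  have "commutator G g d \<in> N" if g: "g \<in> carrier G" for g
  proof -
    have "g \<otimes> d \<otimes> inv g \<in> N #> d" using rcos_self[of "g \<otimes> d \<otimes> inv g" N] sN g dc fixed[OF g] by simp
    then show ?thesis using subgroup.rcos_module_imp[OF sN is_group dc]
      by (simp add: commutator_def)
  qed
  moreover have "d \<notin> N" using d(2) subgroup.rcos_const[OF sN is_group] by blast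
  ultimately show ?thesis using d(1) by blast
qed

section \<open>The derived subgroup of a top \<open>p\<close>-group is central\<close>

lemma centralizer_mod_subgroup:
  assumes "N \<lhd> G" "K \<subseteq> carrier G"
  shows "subgroup (centralizer_mod G N K) G"
proof -
  have sN: "subgroup N G" using normal_imp_subgroup[OF assms(1)] .
  show ?thesis
  proof (rule subgroupI)
    show "centralizer_mod G N K \<subseteq> carrier G" unfolding centralizer_mod_def by blast
    show "centralizer_mod G N K \<noteq> {}"
      using assms(2) subgroup.one_closed[OF sN] unfolding centralizer_mod_def commutator_def
      by (auto intro!: exI[of _ \<one>] simp: subsetD)
  next
    fix a assume a: "a \<in> centralizer_mod G N K"
    have ac: "a \<in> carrier G" using a unfolding centralizer_mod_def by blast
    have "commutator G (inv a) k \<in> N" if k: "k \<in> K" for k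
    proof -
      have "commutator G a k \<in> N" using a k unfolding centralizer_mod_def by blast
      then have "inv a \<otimes> inv (commutator G a k) \<otimes> inv (inv a) \<in> N"
        using normal.inv_op_closed2[OF assms(1) inv_closed[OF ac]] subgroup.m_inv_closed[OF sN]
          by blast
      then show ?thesis using commutator_inv_left[OF ac] k assms(2) ac by (simp add: subsetD)
    qed
    then show "inv a \<in> centralizer_mod G N K" using ac unfolding centralizer_mod_def by blast
  next
    fix a b assume a: "a \<in> centralizer_mod G N K" and b: "b \<in> centralizer_mod G N K"
    have ac: "a \<in> carrier G" and bc: "b \<in> carrier G" using a b unfolding centralizer_mod_def by auto
    have "commutator G (a \<otimes> b) k \<in> N" if k: "k \<in> K" for k
    proof -
      have "commutator G a k \<in> N" "commutator G b k \<in> N"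
        using a b k unfolding centralizer_mod_def by auto
      then have "(a \<otimes> commutator G b k \<otimes> inv a) \<otimes> commutator G a k \<in> N"
        using normal.inv_op_closed2[OF assms(1) ac] subgroup.m_closed[OF sN] by blast
      then show ?thesis using commutator_mult_left[OF ac bc] k assms(2) by (simp add: subsetD)
    qed
    then show "a \<otimes> b \<in> centralizer_mod G N K" using ac bc unfolding centralizer_mod_def by blast
  qed
qed

lemma centralizer_mod_one_eq_carrier_iff:
  assumes "D \<subseteq> carrier G"
  shows "centralizer_mod G {\<one>} D = carrier G \<longleftrightarrow> D \<subseteq> center G"
proof
  assume C: "centralizer_mod G {\<one>} D = carrier G"
  show "D \<subseteq> center G"
  proof
    fix d assume d: "d \<in> D"
    have dc: "d \<in> carrier G" using d assms by blast
    have "d \<otimes> g = g \<otimes> d" if g: "g \<in> carrier G" for g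
      using C g d commutator_eq_one_iff[OF g dc] unfolding centralizer_mod_def by auto
    then show "d \<in> center G" using dc unfolding center_def by blast
  qed
next
  assume DZ: "D \<subseteq> center G"
  have "commutator G g d = \<one>" if "g \<in> carrier G" "d \<in> D" for g d
    using that DZ assms commutator_eq_one_iff[of g d] unfolding center_def by auto
  then show "centralizer_mod G {\<one>} D = carrier G" unfolding centralizer_mod_def by auto
qed

lemma normal_subset_centralizer_mod:
  assumes "N \<lhd> G" "K \<subseteq> carrier G"
  shows "N \<subseteq> centralizer_mod G N K"
proof
  fix x assume x: "x \<in> N"
  have sN: "subgroup N G" using normal_imp_subgroup[OF assms(1)] .
  have xc: "x \<in> carrier G" using subgroup.mem_carrier[OF sN x] .
  have "commutator G x k \<in> N" if k: "k \<in> K" for k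
  proof -
    have kc: "k \<in> carrier G" using k assms(2) by blast
    have "k \<otimes> inv x \<otimes> inv k \<in> N"
      using normal.inv_op_closed2[OF assms(1) kc subgroup.m_inv_closed[OF sN x]] .
    then have "x \<otimes> (k \<otimes> inv x \<otimes> inv k) \<in> N" using subgroup.m_closed[OF sN x] by blast
    then show ?thesis using xc kc by (simp add: commutator_def m_assoc)
  qed
  then show "x \<in> centralizer_mod G N K" using xc unfolding centralizer_mod_def by blast
qed

lemma normal_if_subset_centralizer_mod:
  assumes "N \<lhd> G" "subgroup M G" "N \<subseteq> M" "M \<subseteq> centralizer_mod G N (carrier G)"
  shows "M \<lhd> G"
  unfolding normal_inv_iff
proof (intro conjI assms(2) ballI)
  fix g w assume g: "g \<in> carrier G" and w: "w \<in> M"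
  have wc: "w \<in> carrier G" using subgroup.mem_carrier[OF assms(2) w] .
  have "commutator G g w \<in> N"
    using w g wc assms(4) commutator_mem_swap[OF normal_imp_subgroup[OF assms(1)]]
    unfolding centralizer_mod_def by blast
  then have "commutator G g w \<otimes> w \<in> M" using assms(3) subgroup.m_closed[OF assms(2) _ w] by blast
  then show "g \<otimes> w \<otimes> inv g \<in> M" using conj_eq_commutator_mult[OF g wc] by simp
qed

lemma centralizer_mod_generate:
  assumes "N \<lhd> G" "H \<subseteq> carrier G"
  shows "centralizer_mod G N (generate G H) = centralizer_mod G N H"
proof
  show "centralizer_mod G N (generate G H) \<subseteq> centralizer_mod G N H"
    unfolding centralizer_mod_def using generate.incl[of _ H G] by blast
next
  have sN: "subgroup N G" using normal_imp_subgroup[OF assms(1)] .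
  show "centralizer_mod G N H \<subseteq> centralizer_mod G N (generate G H)"
  proof
    fix g assume g: "g \<in> centralizer_mod G N H"
    have gc: "g \<in> carrier G" using g unfolding centralizer_mod_def by blast
    have "H \<subseteq> centralizer_mod G N {g}"
      using g assms(2) commutator_mem_swap[OF sN] gc unfolding centralizer_mod_def by blast
    then have "generate G H \<subseteq> centralizer_mod G N {g}"
      using generate_subgroup_incl centralizer_mod_subgroup[OF assms(1)] gc by blast
    then show "g \<in> centralizer_mod G N (generate G H)"
      using gc commutator_mem_swap[OF sN] unfolding centralizer_mod_def by blast
  qed
qed

lemma commutator_mult_inv_mem_mod:
  assumes "N \<lhd> G" "g \<in> carrier G" "h \<in> carrier G" "y \<in> carrier G"
    and "commutator G h y \<in> centralizer_mod G N (carrier G)"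
    and "commutator G g y \<otimes> inv (commutator G h y) \<in> N"
  shows "commutator G (g \<otimes> inv h) y \<in> N"
proof -
  let ?a = "g \<otimes> inv h" and ?c = "commutator G h y"
  have sN: "subgroup N G" using normal_imp_subgroup[OF assms(1)] .
  have ac: "?a \<in> carrier G" and cc: "?c \<in> carrier G" using assms(2-4) by auto
  have k: "commutator G ?a ?c \<in> N"
    using assms(5) ac cc commutator_mem_swap[OF sN] unfolding centralizer_mod_def by blast
  have "?a \<otimes> h = g" using assms(2,3) by (simp add: m_assoc)
  then have "commutator G g y = (?a \<otimes> ?c \<otimes> inv ?a) \<otimes> commutator G ?a y"
    using commutator_mult_left[OF ac assms(3,4)] by simp
  also have "\<dots> = commutator G ?a ?c \<otimes> ?c \<otimes> commutator G ?a y"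
    using conj_eq_commutator_mult[OF ac cc] by simp
  finally have "commutator G g y = commutator G ?a ?c \<otimes> ?c \<otimes> commutator G ?a y" .
  then have "commutator G ?a y
      = inv ?c \<otimes> (inv (commutator G ?a ?c) \<otimes> (commutator G g y \<otimes> inv ?c)) \<otimes> inv (inv ?c)"
    using ac cc assms(4) by (simp add: m_assoc)
  moreover have "inv (commutator G ?a ?c) \<otimes> (commutator G g y \<otimes> inv ?c) \<in> N"
    using k assms(6) subgroup.m_closed[OF sN] subgroup.m_inv_closed[OF sN] by blast
  ultimately show ?thesis using normal.inv_op_closed2[OF assms(1) inv_closed[OF cc]] by simp
qed

text \<open>Right translation by \<open>h\<inverse>\<close>, for any \<open>h\<close> in the left-hand set, maps it injectively into the
  right-hand set.\<close>
lemma card_commutator_fiber_le: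
  assumes "finite C" "N \<lhd> G" "subgroup C G" "y \<in> carrier G" "w \<in> carrier G"
    and "\<And>g. g \<in> C \<Longrightarrow> commutator G g y \<in> centralizer_mod G N (carrier G)"
  shows "card {g\<in>C. commutator G g y \<otimes> inv w \<in> N} \<le> card {g\<in>C. commutator G g y \<in> N}"
proof (cases "{g\<in>C. commutator G g y \<otimes> inv w \<in> N} = {}")
  case False
  let ?F = "{g\<in>C. commutator G g y \<otimes> inv w \<in> N}" and ?L = "{g\<in>C. commutator G g y \<in> N}"
  have sN: "subgroup N G" using normal_imp_subgroup[OF assms(2)] .
  have Cc: "C \<subseteq> carrier G" using subgroup.subset[OF assms(3)] .
  obtain h where h: "h \<in> ?F" using False by blast
  have hC: "h \<in> C" and hc: "h \<in> carrier G" using h Cc by auto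
  have "g \<otimes> inv h \<in> ?L" if g: "g \<in> ?F" for g
  proof -
    have gC: "g \<in> C" and gc: "g \<in> carrier G" using g Cc by auto
    have "commutator G g y \<otimes> inv (commutator G h y)
        = (commutator G g y \<otimes> inv w) \<otimes> inv (commutator G h y \<otimes> inv w)"
      using gc hc assms(4,5) by (simp add: m_assoc inv_mult_group)
    then have "commutator G g y \<otimes> inv (commutator G h y) \<in> N"
      using g h subgroup.m_closed[OF sN] subgroup.m_inv_closed[OF sN] by auto
    then have "commutator G (g \<otimes> inv h) y \<in> N"
      using commutator_mult_inv_mem_mod[OF assms(2) gc hc assms(4) assms(6)[OF hC]] by blast
    moreover have "g \<otimes> inv h \<in> C"
      using subgroup.m_closed[OF assms(3) gC subgroup.m_inv_closed[OF assms(3) hC]] .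
    ultimately show ?thesis by blast
  qed
  moreover have "inj_on (\<lambda>g. g \<otimes> inv h) ?F"
    using hc Cc by (intro inj_onI) (auto simp: subsetD)
  ultimately show ?thesis
    using assms(1) card_inj_on_le[of "\<lambda>g. g \<otimes> inv h" ?F ?L] by auto
next
  case True
  then show ?thesis by (metis card.empty zero_le)
qed

lemma card_le_mult_card_commutator_mod:
  assumes "finite (carrier G)" "N \<lhd> G" "Factorial_Ring.prime p"
    and "u \<in> centralizer_mod G N (carrier G)" "u [^] p \<in> N" "y \<in> carrier G" "subgroup C G"
    and "\<And>g. g \<in> C \<Longrightarrow> commutator G g y \<in> N <#> generate G {u}"
  shows "card C \<le> p * card {g\<in>C. commutator G g y \<in> N}"
proof -
  let ?Z = "centralizer_mod G N (carrier G)"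
  define F where "F j = {g\<in>C. commutator G g y \<otimes> inv (u [^] (j::nat)) \<in> N}" for j
  have sN: "subgroup N G" using normal_imp_subgroup[OF assms(2)] .
  have sZ: "subgroup ?Z G" using centralizer_mod_subgroup[OF assms(2) subset_refl] .
  have uc: "u \<in> carrier G" using assms(4) unfolding centralizer_mod_def by blast
  have finC: "finite C" using finite_subset[OF subgroup.subset[OF assms(7)] assms(1)] .
  have "C \<subseteq> (\<Union>j<p. F j)"
  proof
    fix g assume g: "g \<in> C"
    obtain x j where x: "x \<in> N" and j: "j < p" and e: "commutator G g y = x \<otimes> u [^] j"
      using set_mult_generate_elem[OF sN uc assms(5) prime_gt_0_nat[OF assms(3)] assms(8)[OF g]]
      by blast
    have "commutator G g y \<otimes> inv (u [^] j) = x"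
      using e subgroup.mem_carrier[OF sN x] uc by (simp add: m_assoc)
    then show "g \<in> (\<Union>j<p. F j)" using g x j unfolding F_def by blast
  qed
  then have "card C \<le> card (\<Union>j<p. F j)"
    using finC by (intro card_mono) (auto simp: F_def)
  also have "\<dots> \<le> (\<Sum>j<p. card (F j))" by (rule card_UN_le) simp
  also have "\<dots> \<le> (\<Sum>j<p. card {g\<in>C. commutator G g y \<in> N})"
  proof (rule sum_mono)
    have "N <#> generate G {u} \<subseteq> ?Z"
      using set_mult_subset_subgroup[OF sZ normal_subset_centralizer_mod[OF assms(2) subset_refl]]
        generate_subgroup_incl[OF _ sZ] assms(4) by blast
    then show "card (F j) \<le> card {g\<in>C. commutator G g y \<in> N}" for j
      unfolding F_def using card_commutator_fiber_le[OF finC assms(2,7,6)] assms(8) uc by blast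
  qed
  also have "\<dots> = p * card {g\<in>C. commutator G g y \<in> N}" by simp
  finally show ?thesis .
qed

lemma exists_maximal_proper_subgroup_containing:
  assumes "finite (carrier G)" "subgroup H G" "subgroup K G" "H \<subset> K"
  shows "\<exists>K\<^sub>0 y. subgroup K\<^sub>0 G \<and> H \<subseteq> K\<^sub>0 \<and> K\<^sub>0 \<subset> K \<and> y \<in> K - K\<^sub>0 \<and> generate G (insert y K\<^sub>0) = K"
proof -
  have "H \<subseteq> H \<and> H \<subset> K" using assms(4) by blast
  then obtain K\<^sub>0 where sK0: "subgroup K\<^sub>0 G" and "H \<subseteq> K\<^sub>0 \<and> K\<^sub>0 \<subset> K" and "H \<subseteq> K\<^sub>0"
    and K0_max: "\<And>T. subgroup T G \<Longrightarrow> H \<subseteq> T \<and> T \<subset> K \<Longrightarrow> K\<^sub>0 \<subseteq> T \<Longrightarrow> T = K\<^sub>0"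
    by (rule finite_subgroup_family_has_maximal[OF assms(1,2), where P = "\<lambda>T. H \<subseteq> T \<and> T \<subset> K"])
      blast
  then have HK0: "H \<subseteq> K\<^sub>0" and K0K: "K\<^sub>0 \<subset> K" by auto
  then obtain y where y: "y \<in> K" "y \<notin> K\<^sub>0" by blast
  have Kc: "K \<subseteq> carrier G" using subgroup.subset[OF assms(3)] .
  let ?H = "generate G (insert y K\<^sub>0)"
  have "?H = K"
  proof (rule ccontr)
    assume "?H \<noteq> K"
    moreover have "?H \<subseteq> K" using generate_subgroup_incl[OF _ assms(3)] y(1) K0K by blast
    moreover have "K\<^sub>0 \<subseteq> ?H" "y \<in> ?H" using generate.incl[of _ "insert y K\<^sub>0" G] by auto
    moreover have "insert y K\<^sub>0 \<subseteq> carrier G" using y(1) K0K Kc by blast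
    then have "subgroup ?H G" using generate_is_subgroup by blast
    ultimately show False using K0_max HK0 y(2) by blast
  qed
  then show ?thesis using sK0 HK0 K0K y by blast
qed

text \<open>The index \<open>|G : C\<^sub>G(K/N)|\<close> is at most \<open>|K : K \<inter> Z(G/N)|\<close> when \<open>[G, K] \<le> N\<langle>u\<rangle>\<close> with \<open>u\<close>
  central of order \<open>p\<close> modulo \<open>N\<close>: adjoining one element to \<open>K\<close> multiplies \<open>|K|\<close> by at least \<open>p\<close>
  and divides \<open>|C\<^sub>G(K/N)|\<close> by at most \<open>p\<close>.\<close>
lemma index_centralizer_mod_le:
  assumes "finite (carrier G)" "card (carrier G) = p ^ n" "Factorial_Ring.prime p" "N \<lhd> G"
    and "u \<in> centralizer_mod G N (carrier G)" "u [^] p \<in> N"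
    and "subgroup K G" "\<And>g k. g \<in> carrier G \<Longrightarrow> k \<in> K \<Longrightarrow> commutator G g k \<in> N <#> generate G {u}"
  shows "card (carrier G) * card (K \<inter> centralizer_mod G N (carrier G))
           \<le> card K * card (centralizer_mod G N K)"
  using assms(7,8)
proof (induction "card K" arbitrary: K rule: less_induct)
  case less
  let ?Z = "centralizer_mod G N (carrier G)"
  have sN: "subgroup N G" using normal_imp_subgroup[OF assms(4)] .
  have Kc: "K \<subseteq> carrier G" using subgroup.subset[OF less.prems(1)] .
  show ?case
  proof (cases "K \<subseteq> ?Z")
    case True
    then have "centralizer_mod G N K = carrier G"
      using Kc commutator_mem_swap[OF sN] unfolding centralizer_mod_def by blast
    then show ?thesis using True by (simp add: Int_absorb2)
  next
    case False
    have "subgroup (K \<inter> ?Z) G"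
      using subgroups_Inter_pair[OF less.prems(1)] centralizer_mod_subgroup[OF assms(4) subset_refl]
      by blast
    then obtain K\<^sub>0 y where sK0: "subgroup K\<^sub>0 G" and KZ_K0: "K \<inter> ?Z \<subseteq> K\<^sub>0" and K0K: "K\<^sub>0 \<subset> K"
      and y: "y \<in> K" and K_gen: "generate G (insert y K\<^sub>0) = K"
      using exists_maximal_proper_subgroup_containing[OF assms(1) _ less.prems(1)] False by blast
    have yc: "y \<in> carrier G" and K0c: "K\<^sub>0 \<subseteq> carrier G" using y K0K Kc by auto
    have "card K\<^sub>0 < card K" using psubset_card_mono[OF finite_subset[OF Kc assms(1)] K0K] .
    moreover have "K\<^sub>0 \<inter> ?Z = K \<inter> ?Z" using KZ_K0 K0K by blast
    ultimately have IH:
        "card (carrier G) * card (K \<inter> ?Z) \<le> card K\<^sub>0 * card (centralizer_mod G N K\<^sub>0)"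
      using less.hyps[OF _ sK0] less.prems(2) K0K by (metis psubsetD)
    have "card (centralizer_mod G N K\<^sub>0)
        \<le> p * card {g\<in>centralizer_mod G N K\<^sub>0. commutator G g y \<in> N}"
      using card_le_mult_card_commutator_mod[OF assms(1,4,3,5,6) yc
          centralizer_mod_subgroup[OF assms(4) K0c]]
        less.prems(2) y unfolding centralizer_mod_def by blast
    also have "{g\<in>centralizer_mod G N K\<^sub>0. commutator G g y \<in> N} = centralizer_mod G N K"
      using centralizer_mod_generate[OF assms(4), of "insert y K\<^sub>0"] K_gen yc K0c
      unfolding centralizer_mod_def by auto
    finally have fib: "card (centralizer_mod G N K\<^sub>0) \<le> p * card (centralizer_mod G N K)" .
    have "p * (card (carrier G) * card (K \<inter> ?Z)) \<le> (p * card K\<^sub>0) * card (centralizer_mod G N K\<^sub>0)"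
      using IH by simp
    also have "\<dots> \<le> card K * card (centralizer_mod G N K\<^sub>0)"
      using prime_mult_card_le_proper_subgroup[OF assms(1-3) sK0 less.prems(1) K0K] by simp
    also have "\<dots> \<le> card K * (p * card (centralizer_mod G N K))" using fib by simp
    finally show ?thesis using prime_gt_0_nat[OF assms(3)] by simp
  qed
qed

text \<open>Three subgroups lemma: \<open>[[C, C], G] \<le> N\<close> for \<open>C = C\<^sub>G(D/N)\<close>, since \<open>[[C, G], C]\<close> and
  \<open>[[G, C], C]\<close> lie in \<open>[D, C] \<le> N\<close>.\<close>
lemma derived_centralizer_mod_subset:
  assumes "N \<lhd> G" "derived G (carrier G) \<subseteq> D" "D \<subseteq> carrier G"
  shows "derived G (centralizer_mod G N D) \<subseteq> centralizer_mod G N (carrier G)"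
proof -
  let ?C = "centralizer_mod G N D"
  have sN: "subgroup N G" using normal_imp_subgroup[OF assms(1)] .
  have sC: "subgroup ?C G" using centralizer_mod_subgroup[OF assms(1,3)] .
  have Cc: "?C \<subseteq> carrier G" using subgroup.subset[OF sC] .
  have DC: "commutator G d c \<in> N" if "c \<in> ?C" "d \<in> D" for c d
    using that assms(3) Cc commutator_mem_swap[OF sN] unfolding centralizer_mod_def by blast
  have "commutator G (commutator G a b) z \<in> N" if a: "a \<in> ?C" and b: "b \<in> ?C" and z: "z \<in> carrier G"
    for a b z
  proof -
    have ac: "a \<in> carrier G" and bc: "b \<in> carrier G" using a b Cc by auto
    let ?T1 = "inv a \<otimes> commutator G (commutator G a b) z \<otimes> a"
    let ?T2 = "z \<otimes> commutator G (commutator G (inv z) (inv a)) b \<otimes> inv z"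
    let ?T3 = "b \<otimes> commutator G (commutator G (inv b) z) (inv a) \<otimes> inv b"
    have "commutator G (inv z) (inv a) \<in> D" "commutator G (inv b) z \<in> D"
      using commutator_in_derived[of _ "carrier G"] assms(2) z ac bc by auto
    then have "?T2 \<in> N" "?T3 \<in> N"
      using normal.inv_op_closed2[OF assms(1) z DC[OF b]]
        normal.inv_op_closed2[OF assms(1) bc DC[OF subgroup.m_inv_closed[OF sC a]]] by auto
    then have T23: "?T2 \<otimes> ?T3 \<in> N" using subgroup.m_closed[OF sN] by blast
    have "?T1 \<otimes> (?T2 \<otimes> ?T3) = \<one>" using hall_witt_identity[OF ac bc z] ac bc z by (simp add: m_assoc)
    then have "inv (?T2 \<otimes> ?T3) = ?T1" using ac bc z by (intro inv_equality) auto
    then have "?T1 \<in> N" using subgroup.m_inv_closed[OF sN T23] by simp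
    then have "a \<otimes> ?T1 \<otimes> inv a \<in> N" using normal.inv_op_closed2[OF assms(1) ac] by blast
    then show ?thesis using ac bc z by (simp add: m_assoc)
  qed
  then have "derived_set G ?C \<subseteq> centralizer_mod G N (carrier G)"
    unfolding derived_set_eq_commutators centralizer_mod_def using Cc by auto
  then show ?thesis
    unfolding derived_def
      using generate_subgroup_incl centralizer_mod_subgroup[OF assms(1) subset_refl]
    by blast
qed

lemma order_abelianization_mult_card_derived:
  assumes "subgroup H G"
  shows "order (abelianization (G\<lparr>carrier := H\<rparr>)) * card (derived G H) = card H"
proof -
  interpret H: group "G\<lparr>carrier := H\<rparr>" using subgroup_imp_group[OF assms] .
  have eq: "derived (G\<lparr>carrier := H\<rparr>) H = derived G H"
    using derived_consistent[OF subset_refl assms] .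
  have "subgroup (derived G H) (G\<lparr>carrier := H\<rparr>)" using H.derived_is_subgroup[of H] eq by simp
  moreover have "order (abelianization (G\<lparr>carrier := H\<rparr>))
      = card (rcosets\<^bsub>G\<lparr>carrier := H\<rparr>\<^esub> (derived G H))"
    unfolding abelianization_def commutator_subgroup_def order_def FactGroup_def using eq by simp
  ultimately show ?thesis using H.lagrange by (simp add: order_def)
qed

lemma exists_normal_subgroup_commutator_layer:
  assumes "finite (carrier G)" "card (carrier G) = p ^ n" "Factorial_Ring.prime p"
    and "\<not> derived G (carrier G) \<subseteq> center G"
  shows "\<exists>N u. N \<lhd> G \<and> centralizer_mod G N (derived G (carrier G)) \<noteq> carrier G \<and>
           u \<in> centralizer_mod G N (carrier G) \<and> u [^] p \<in> N \<and>
           (\<forall>g\<in>carrier G. \<forall>d\<in>derived G (carrier G). commutator G g d \<in> N <#> generate G {u})"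
proof -
  let ?D = "derived G (carrier G)"
  let ?P = "\<lambda>N. N \<lhd> G \<and> N \<subseteq> ?D \<and> centralizer_mod G N ?D \<noteq> carrier G"
  have sD: "subgroup ?D G" and nD: "?D \<lhd> G" using derived_is_subgroup derived_self_is_normal by auto
  have Dc: "?D \<subseteq> carrier G" using subgroup.subset[OF sD] .
  have "?P {\<one>}"
    using centralizer_mod_one_eq_carrier_iff[OF Dc] assms(4) one_is_normal
      subgroup.one_closed[OF sD]
    by blast
  then obtain N where sN: "subgroup N G" and "?P N"
    and N_max: "\<And>K. subgroup K G \<Longrightarrow> ?P K \<Longrightarrow> N \<subseteq> K \<Longrightarrow> K = N"
    by (rule finite_subgroup_family_has_maximal[OF assms(1) triv_subgroup, where P = ?P]) blast
  then have nN: "N \<lhd> G" and ND: "N \<subseteq> ?D" and CN: "centralizer_mod G N ?D \<noteq> carrier G" by auto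
  let ?Z = "centralizer_mod G N (carrier G)"
  have "N \<noteq> ?D"
  proof
    assume "N = ?D"
    then have "centralizer_mod G N ?D = carrier G"
      using commutator_in_derived[of _ "carrier G"] Dc unfolding centralizer_mod_def by blast
    then show False using CN by blast
  qed
  then obtain d where d: "d \<in> ?D" "d \<notin> N" and dZ: "\<And>g. g \<in> carrier G \<Longrightarrow> commutator G g d \<in> N"
    using exists_central_elem_mod[OF assms(1-3) nN nD] ND by blast
  have sDZ: "subgroup (?D \<inter> ?Z) G"
    using subgroups_Inter_pair[OF sD centralizer_mod_subgroup[OF nN subset_refl]] .
  have dc: "d \<in> carrier G" using d(1) Dc by blast
  have "d \<in> ?Z" using dZ commutator_mem_swap[OF sN dc] unfolding centralizer_mod_def
    by (simp add: dc)
  then obtain u where u: "u \<in> ?D \<inter> ?Z" "u \<notin> N" "u [^] p \<in> N"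
    using exists_elem_order_p_mod[OF assms(2) sN sDZ _ d(2)] d(1) by blast
  have uc: "u \<in> carrier G" using u(1) Dc by blast
  let ?N' = "N <#> generate G {u}"
  have sN': "subgroup ?N' G" using mult_norm_subgroup[OF nN generate_is_subgroup] uc by simp
  have "N \<subseteq> ?D \<inter> ?Z" using ND normal_subset_centralizer_mod[OF nN subset_refl] by blast
  moreover have "generate G {u} \<subseteq> ?D \<inter> ?Z" using generate_subgroup_incl[OF _ sDZ] u(1) by simp
  ultimately have N'_DZ: "?N' \<subseteq> ?D \<inter> ?Z" using set_mult_subset_subgroup[OF sDZ] by blast
  have NN': "N \<subseteq> ?N'" using subset_set_mult_left[OF generate_is_subgroup subgroup.subset[OF sN]] uc
    by simp
  have "?N' \<lhd> G" using normal_if_subset_centralizer_mod[OF nN sN' NN'] N'_DZ by blast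
  moreover have "?N' \<noteq> N" using mem_set_mult_generate[OF sN uc] u(2) by blast
  ultimately have "centralizer_mod G ?N' ?D = carrier G" using N_max[OF sN'] N'_DZ NN' by blast
  then have "\<forall>g\<in>carrier G. \<forall>d\<in>?D. commutator G g d \<in> ?N'" unfolding centralizer_mod_def by blast
  then show ?thesis using nN CN u(1,3) by blast
qed

lemma derived_subset_center_if_top:
  assumes "finite (carrier G)" "card (carrier G) = p ^ n" "Factorial_Ring.prime p"
    and top: "\<And>H. subgroup H G \<Longrightarrow> H \<subset> carrier G \<Longrightarrow>
                order (abelianization (G\<lparr>carrier := H\<rparr>)) < order (abelianization G)"
  shows "derived G (carrier G) \<subseteq> center G"
proof (rule ccontr)
  let ?D = "derived G (carrier G)"
  assume "\<not> ?D \<subseteq> center G"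
  then obtain N u where nN: "N \<lhd> G" and CN: "centralizer_mod G N ?D \<noteq> carrier G"
    and u: "u \<in> centralizer_mod G N (carrier G)" "u [^] p \<in> N"
    and DN: "\<And>g d. g \<in> carrier G \<Longrightarrow> d \<in> ?D \<Longrightarrow> commutator G g d \<in> N <#> generate G {u}"
    using exists_normal_subgroup_commutator_layer[OF assms(1-3)] by blast
  let ?C = "centralizer_mod G N ?D" and ?Z = "centralizer_mod G N (carrier G)"
  have sD: "subgroup ?D G" using derived_is_subgroup by simp
  have Dc: "?D \<subseteq> carrier G" using subgroup.subset[OF sD] .
  have sC: "subgroup ?C G" using centralizer_mod_subgroup[OF nN Dc] .
  have Cc: "?C \<subseteq> carrier G" using subgroup.subset[OF sC] .
  have bound: "card (carrier G) * card (?D \<inter> ?Z) \<le> card ?D * card ?C"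
    using index_centralizer_mod_le[OF assms(1-3) nN u sD DN] .
  have "derived G ?C \<subseteq> ?D \<inter> ?Z"
    using derived_centralizer_mod_subset[OF nN subset_refl Dc] mono_derived[OF Cc] by blast
  moreover have "finite (?D \<inter> ?Z)" using finite_subset[OF Dc assms(1)] by blast
  ultimately have C': "card (derived G ?C) \<le> card (?D \<inter> ?Z)" by (simp add: card_mono)
  let ?a = "order (abelianization (G\<lparr>carrier := ?C\<rparr>))" and ?b = "order (abelianization G)"
  have "?a < ?b" using top[OF sC] Cc CN by blast
  moreover have "card (derived G ?C) > 0"
  proof -
    have "finite (derived G ?C)"
      using finite_subset[OF mono_derived[OF Cc] finite_subset[OF Dc assms(1)]] .
    then show ?thesis using subgroup.one_closed[OF derived_is_subgroup[OF Cc]] card_gt_0_iff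
      by blast
  qed
  moreover have "card ?D > 0"
    using subgroup.one_closed[OF sD] finite_subset[OF Dc assms(1)] card_gt_0_iff by blast
  ultimately have "card ?D * ?a * card (derived G ?C) < card ?D * ?b * card (derived G ?C)" by simp
  also have "\<dots> = card (carrier G) * card (derived G ?C)"
    using order_abelianization_mult_card_derived[OF subgroup_self] by (simp add: ac_simps)
  also have "\<dots> \<le> card (carrier G) * card (?D \<inter> ?Z)" using C' by simp
  also have "\<dots> \<le> card ?D * card ?C" using bound .
  also have "\<dots> = card ?D * ?a * card (derived G ?C)"
    using order_abelianization_mult_card_derived[OF sC] by (simp add: ac_simps)
  finally show False by simp
qed

section \<open>Complements\<close>

lemma subset_set_mult_if_maximal_disjoint:
  assumes "Factorial_Ring.prime p" "Q \<lhd> G" "subgroup B G" "Q \<inter> B = {\<one>}"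
    and "E \<subseteq> carrier G" "\<And>x. x \<in> E \<Longrightarrow> x [^] (p::nat) \<in> Q"
    and "\<And>x. x \<in> E \<Longrightarrow> (Q <#> generate G {x}) \<inter> B = {\<one>} \<Longrightarrow> x \<in> Q"
  shows "E \<subseteq> Q <#> B"
proof
  fix x assume x: "x \<in> E"
  have sQ: "subgroup Q G" using assms(2) normal_imp_subgroup by blast
  have sQB: "subgroup (Q <#> B) G" using mult_norm_subgroup[OF assms(2,3)] .
  have QQB: "Q \<subseteq> Q <#> B" using subset_set_mult_left[OF assms(3) subgroup.subset[OF sQ]] .
  have xc: "x \<in> carrier G" using assms(5) x by blast
  have sQx: "subgroup (Q <#> generate G {x}) G"
    using mult_norm_subgroup[OF assms(2) generate_is_subgroup] xc by simp
  show "x \<in> Q <#> B"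
  proof (rule ccontr)
    assume xn: "x \<notin> Q <#> B"
    have "(Q <#> generate G {x}) \<inter> B \<subseteq> {\<one>}"
    proof
      fix w assume w: "w \<in> (Q <#> generate G {x}) \<inter> B"
      have "w \<in> Q"
      proof (rule ccontr)
        assume "w \<notin> Q"
        moreover have "w \<in> Q <#> B"
          using subset_set_mult_right[OF sQ subgroup.subset[OF assms(3)]] w by blast
        ultimately have "x \<in> Q <#> B"
          using mem_subgroup_if_set_mult_generate_witness[OF sQB sQ QQB xc assms(1) assms(6)[OF x]]
            w
          by blast
        then show False using xn by blast
      qed
      then show "w \<in> {\<one>}" using w assms(4) by blast
    qed
    moreover have "\<one> \<in> (Q <#> generate G {x}) \<inter> B"
      using subgroup.one_closed[OF sQx] subgroup.one_closed[OF assms(3)] by blast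
    ultimately have "x \<in> Q" using assms(7)[OF x] by blast
    then show False using xn QQB by blast
  qed
qed

lemma exists_central_complement:
  assumes "finite (carrier G)" "Factorial_Ring.prime p" "subgroup D G"
    and "\<And>z. z \<in> center G \<Longrightarrow> z [^] (p::nat) = \<one>"
  shows "\<exists>A. subgroup A G \<and> A \<subseteq> center G \<and> A \<inter> D = {\<one>} \<and> center G \<subseteq> A <#> D"
proof -
  have "{\<one>} \<subseteq> center G \<and> {\<one>} \<inter> D = {\<one>}"
    using subgroup.one_closed[OF center_subgroup] subgroup.one_closed[OF assms(3)] by blast
  then obtain A where sA: "subgroup A G" and "A \<subseteq> center G \<and> A \<inter> D = {\<one>}" and "{\<one>} \<subseteq> A"
    and A_max: "\<And>B. subgroup B G \<Longrightarrow> B \<subseteq> center G \<and> B \<inter> D = {\<one>} \<Longrightarrow> A \<subseteq> B \<Longrightarrow> B = A"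
    by (rule finite_subgroup_family_has_maximal[OF assms(1) triv_subgroup,
          where P = "\<lambda>B. B \<subseteq> center G \<and> B \<inter> D = {\<one>}"]) blast
  then have AZ: "A \<subseteq> center G" and AD: "A \<inter> D = {\<one>}" by auto
  have nA: "A \<lhd> G" using normal_if_subset_center[OF sA AZ] .
  have "center G \<subseteq> A <#> D"
  proof (rule subset_set_mult_if_maximal_disjoint[OF assms(2) nA assms(3) AD])
    show "center G \<subseteq> carrier G" using subgroup.subset[OF center_subgroup] .
    show "z [^] p \<in> A" if "z \<in> center G" for z
      using assms(4)[OF that] subgroup.one_closed[OF sA] by simp
  next
    fix z assume z: "z \<in> center G" and disj: "(A <#> generate G {z}) \<inter> D = {\<one>}"
    have zc: "z \<in> carrier G" using z subgroup.subset[OF center_subgroup] by blast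
    have sAz: "subgroup (A <#> generate G {z}) G"
      using mult_norm_subgroup[OF nA generate_is_subgroup] zc by simp
    have "generate G {z} \<subseteq> center G"
      using generate_subgroup_incl[OF _ center_subgroup] z by simp
    then have "A <#> generate G {z} \<subseteq> center G"
      using set_mult_subset_subgroup[OF center_subgroup AZ] by simp
    moreover have "A \<subseteq> A <#> generate G {z}"
      using subset_set_mult_left[OF generate_is_subgroup subgroup.subset[OF sA]] zc by simp
    ultimately have "A <#> generate G {z} = A" using A_max[OF sAz] disj by blast
    then show "z \<in> A" using mem_set_mult_generate[OF sA zc] by simp
  qed
  then show ?thesis using sA AZ AD by blast
qed

lemma exists_complement_containing_derived:
  assumes "finite (carrier G)" "Factorial_Ring.prime p"
    and "\<And>g. g \<in> carrier G \<Longrightarrow> g [^] (p::nat) \<in> derived G (carrier G)"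
    and "subgroup A G" "A \<inter> derived G (carrier G) = {\<one>}"
  shows "\<exists>S. subgroup S G \<and> derived G (carrier G) \<subseteq> S \<and> S \<inter> A = {\<one>} \<and> S <#> A = carrier G"
proof -
  let ?D = "derived G (carrier G)"
  have "?D \<subseteq> ?D \<and> ?D \<inter> A = {\<one>}" using assms(5) by blast
  then obtain S where sS: "subgroup S G" and "?D \<subseteq> S \<and> S \<inter> A = {\<one>}" and "?D \<subseteq> S"
    and S_max: "\<And>T. subgroup T G \<Longrightarrow> ?D \<subseteq> T \<and> T \<inter> A = {\<one>} \<Longrightarrow> S \<subseteq> T \<Longrightarrow> T = S"
    by (rule finite_subgroup_family_has_maximal[OF assms(1) derived_is_subgroup[OF subset_refl],
          where P = "\<lambda>T. ?D \<subseteq> T \<and> T \<inter> A = {\<one>}"]) blast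
  then have DS: "?D \<subseteq> S" and SA: "S \<inter> A = {\<one>}" by auto
  have nS: "S \<lhd> G" using normal_if_derived_subset[OF sS DS] .
  have "carrier G \<subseteq> S <#> A"
  proof (rule subset_set_mult_if_maximal_disjoint[OF assms(2) nS assms(4) SA subset_refl])
    show "g [^] p \<in> S" if "g \<in> carrier G" for g using assms(3)[OF that] DS by blast
  next
    fix g assume g: "g \<in> carrier G" and disj: "(S <#> generate G {g}) \<inter> A = {\<one>}"
    have sSg: "subgroup (S <#> generate G {g}) G"
      using mult_norm_subgroup[OF nS generate_is_subgroup] g by simp
    have "S \<subseteq> S <#> generate G {g}"
      using subset_set_mult_left[OF generate_is_subgroup subgroup.subset[OF sS]] g by simp
    then have "S <#> generate G {g} = S" using S_max[OF sSg] disj DS by blast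
    then show "g \<in> S" using mem_set_mult_generate[OF sS g] by simp
  qed
  moreover have "S <#> A \<subseteq> carrier G"
    using setmult_subset_G[OF subgroup.subset[OF sS] subgroup.subset[OF assms(4)]] .
  ultimately show ?thesis using sS DS SA by blast
qed

section \<open>The special factor\<close>

lemma maximal_subgroup_if_maximal_avoiding:
  assumes "Factorial_Ring.prime p" "M \<lhd> G" "\<And>g. g \<in> carrier G \<Longrightarrow> g [^] (p::nat) \<in> M"
    and "y \<in> carrier G" "y \<notin> M" "\<And>K. subgroup K G \<Longrightarrow> M \<subseteq> K \<Longrightarrow> y \<notin> K \<Longrightarrow> K = M"
  shows "maximal_subgroup M G"
  unfolding maximal_subgroup_def
proof (intro conjI allI impI)
  have sM: "subgroup M G" using normal_imp_subgroup[OF assms(2)] .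
  then show "subgroup M G" .
  show "M \<noteq> carrier G" using assms(4,5) by blast
  fix K assume "subgroup K G \<and> M \<subseteq> K"
  then have sK: "subgroup K G" and MK: "M \<subseteq> K" by auto
  show "K = M \<or> K = carrier G"
  proof (cases "y \<in> K")
    case False
    then show ?thesis using assms(6)[OF sK MK] by blast
  next
    case yK: True
    have "z \<in> K" if z: "z \<in> carrier G" for z
    proof (cases "z \<in> M")
      case True
      then show ?thesis using MK by blast
    next
      case False
      have sMz: "subgroup (M <#> generate G {z}) G"
        using mult_norm_subgroup[OF assms(2) generate_is_subgroup] z by simp
      have "M \<subseteq> M <#> generate G {z}"
        using subset_set_mult_left[OF generate_is_subgroup subgroup.subset[OF sM]] z by simp
      moreover have "M <#> generate G {z} \<noteq> M" using mem_set_mult_generate[OF sM z] False by blast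
      ultimately have "y \<in> M <#> generate G {z}" using assms(6)[OF sMz] by blast
      then show ?thesis
        using mem_subgroup_if_set_mult_generate_witness[OF sK sM MK z assms(1) assms(3)[OF z]]
          yK assms(5)
        by blast
    qed
    then show ?thesis using subgroup.subset[OF sK] by blast
  qed
qed

lemma frattini_subset_if_elementary_quotient:
  assumes "finite (carrier G)" "Factorial_Ring.prime p"
    and "subgroup N G" "derived G (carrier G) \<subseteq> N" "\<And>g. g \<in> carrier G \<Longrightarrow> g [^] (p::nat) \<in> N"
  shows "frattini G \<subseteq> N"
proof
  fix y assume yF: "y \<in> frattini G"
  show "y \<in> N"
  proof (rule ccontr)
    assume "y \<notin> N"
    then have "N \<subseteq> N \<and> y \<notin> N" by blast
    then obtain M where sM: "subgroup M G" and "N \<subseteq> M \<and> y \<notin> M" and "N \<subseteq> M"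
      and M_max: "\<And>K. subgroup K G \<Longrightarrow> N \<subseteq> K \<and> y \<notin> K \<Longrightarrow> M \<subseteq> K \<Longrightarrow> K = M"
      by (rule finite_subgroup_family_has_maximal[OF assms(1,3), where P = "\<lambda>T. N \<subseteq> T \<and> y \<notin> T"])
        blast
    then have NM: "N \<subseteq> M" and yM: "y \<notin> M" by auto
    have "maximal_subgroup M G"
    proof (rule maximal_subgroup_if_maximal_avoiding[OF assms(2) _ _ _ yM])
      show "M \<lhd> G" using normal_if_derived_subset[OF sM] assms(4) NM by blast
      show "g [^] p \<in> M" if "g \<in> carrier G" for g using assms(5)[OF that] NM by blast
      show "y \<in> carrier G" using yF unfolding frattini_def by blast
      show "K = M" if "subgroup K G" "M \<subseteq> K" "y \<notin> K" for K using M_max that NM by blast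
    qed
    then show False using yF yM unfolding frattini_def by blast
  qed
qed

lemma subset_frattini_if_central_derived:
  assumes "subgroup N G" "N \<subseteq> center G" "N \<subseteq> derived G (carrier G)"
  shows "N \<subseteq> frattini G"
proof
  fix d assume d: "d \<in> N"
  have Nc: "N \<subseteq> carrier G" using subgroup.subset[OF assms(1)] .
  have "d \<in> M" if M: "maximal_subgroup M G" for M
  proof (rule ccontr)
    assume dM: "d \<notin> M"
    have sM: "subgroup M G" using M unfolding maximal_subgroup_def by blast
    have sNM: "subgroup (N <#> M) G"
      using mult_norm_subgroup[OF normal_if_subset_center[OF assms(1,2)] sM] .
    have "M \<subseteq> N <#> M" using subset_set_mult_right[OF assms(1) subgroup.subset[OF sM]] .
    moreover have "N <#> M \<noteq> M" using subset_set_mult_left[OF sM Nc] d dM by blast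
    ultimately have NM: "N <#> M = carrier G" using M sNM unfolding maximal_subgroup_def by blast
    have "derived_set G (carrier G) \<subseteq> M"
    proof
      fix x assume "x \<in> derived_set G (carrier G)"
      then obtain g h where "g \<in> N <#> M" "h \<in> N <#> M" "x = commutator G g h"
        unfolding derived_set_eq_commutators NM by blast
      then obtain n1 m1 n2 m2 where nm: "n1 \<in> N" "m1 \<in> M" "n2 \<in> N" "m2 \<in> M"
        and x: "x = commutator G (n1 \<otimes> m1) (n2 \<otimes> m2)"
        unfolding set_mult_def by blast
      have mc: "m1 \<in> carrier G" "m2 \<in> carrier G" using nm(2,4) subgroup.subset[OF sM] by auto
      have "n1 \<otimes> m1 = m1 \<otimes> n1" "n2 \<otimes> m2 = m2 \<otimes> n2"
        using nm mc assms(2) unfolding center_def by auto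
      then have "x = commutator G m1 m2"
        using x commutator_mult_central[OF mc] nm(1,3) assms(2) by auto
      then show "x \<in> M" using commutator_mem_subgroup[OF sM nm(2,4)] by simp
    qed
    then have "derived G (carrier G) \<subseteq> M"
      unfolding derived_def using generate_subgroup_incl[OF _ sM] by blast
    then show False using d dM assms(3) by blast
  qed
  then show "d \<in> frattini G" unfolding frattini_def using d Nc by blast
qed

lemma derived_eq_if_central_factor:
  assumes "subgroup S G" "A \<subseteq> center G" "S <#> A = carrier G"
  shows "derived G S = derived G (carrier G)"
proof
  show "derived G S \<subseteq> derived G (carrier G)" using mono_derived[OF subgroup.subset[OF assms(1)]] .
next
  have "derived_set G (carrier G) \<subseteq> derived_set G S"
  proof
    fix x assume "x \<in> derived_set G (carrier G)"
    then obtain g h where "g \<in> S <#> A" "h \<in> S <#> A" "x = commutator G g h"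
      unfolding derived_set_eq_commutators assms(3) by blast
    then obtain s1 a1 s2 a2 where sa: "s1 \<in> S" "a1 \<in> A" "s2 \<in> S" "a2 \<in> A"
      and x: "x = commutator G (s1 \<otimes> a1) (s2 \<otimes> a2)"
      unfolding set_mult_def by blast
    have "s1 \<in> carrier G" "s2 \<in> carrier G" using sa(1,3) subgroup.subset[OF assms(1)] by auto
    then have "x = commutator G s1 s2" using x commutator_mult_central sa(2,4) assms(2) by blast
    then show "x \<in> derived_set G S" using sa(1,3) unfolding derived_set_eq_commutators by blast
  qed
  then show "derived G (carrier G) \<subseteq> derived G S" unfolding derived_def by (rule mono_generate)
qed

lemma center_eq_if_central_factor:
  assumes "subgroup S G" "A \<subseteq> center G" "S <#> A = carrier G"
  shows "center (G\<lparr>carrier := S\<rparr>) = S \<inter> center G"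
proof
  show "S \<inter> center G \<subseteq> center (G\<lparr>carrier := S\<rparr>)"
    using subgroup.subset[OF assms(1)] unfolding center_def by auto
next
  show "center (G\<lparr>carrier := S\<rparr>) \<subseteq> S \<inter> center G"
  proof
    fix z assume "z \<in> center (G\<lparr>carrier := S\<rparr>)"
    then have zS: "z \<in> S" and zcomm: "\<And>s. s \<in> S \<Longrightarrow> z \<otimes> s = s \<otimes> z"
      unfolding center_def by auto
    have zc: "z \<in> carrier G" using zS subgroup.subset[OF assms(1)] by blast
    have "z \<otimes> g = g \<otimes> z" if g: "g \<in> carrier G" for g
    proof -
      obtain s a where sa: "s \<in> S" "a \<in> A" "g = s \<otimes> a"
        using g unfolding assms(3)[symmetric] set_mult_def by blast
      have sc: "s \<in> carrier G" using sa(1) subgroup.subset[OF assms(1)] by blast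
      have ac: "a \<in> carrier G" and za: "z \<otimes> a = a \<otimes> z"
        using sa(2) assms(2) zc unfolding center_def by auto
      have "z \<otimes> g = s \<otimes> z \<otimes> a" using sa(3) zcomm[OF sa(1)] zc sc ac
        by (simp add: m_assoc [symmetric])
      also have "\<dots> = g \<otimes> z" using sa(3) za zc sc ac by (simp add: m_assoc)
      finally show ?thesis .
    qed
    then show "z \<in> S \<inter> center G" using zS zc unfolding center_def by blast
  qed
qed

lemma inter_set_mult_subset_if_disjoint:
  assumes "subgroup S G" "D \<subseteq> S" "A \<subseteq> carrier G" "S \<inter> A = {\<one>}"
  shows "S \<inter> (A <#> D) \<subseteq> D"
proof
  fix z assume z: "z \<in> S \<inter> (A <#> D)"
  then obtain a d where ad: "a \<in> A" "d \<in> D" "z = a \<otimes> d" unfolding set_mult_def by blast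
  have dS: "d \<in> S" using ad(2) assms(2) by blast
  have dc: "d \<in> carrier G" and ac: "a \<in> carrier G"
    using subgroup.mem_carrier[OF assms(1) dS] ad(1) assms(3) by auto
  have "a = z \<otimes> inv d" using ad(3) ac dc by (simp add: m_assoc)
  moreover have "z \<otimes> inv d \<in> S"
    using z subgroup.m_closed[OF assms(1) _ subgroup.m_inv_closed[OF assms(1) dS]] by blast
  ultimately have "a = \<one>" using ad(1) assms(4) by blast
  then show "z \<in> D" using ad(2,3) dc by simp
qed

lemma special_p_group_central_factor:
  assumes "finite (carrier G)" "card (carrier G) = p ^ n" "Factorial_Ring.prime p"
    and "derived G (carrier G) \<subseteq> center G"
    and "\<And>g. g \<in> carrier G \<Longrightarrow> g [^] (p::nat) \<in> derived G (carrier G)"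
    and "subgroup S G" "derived G (carrier G) \<subseteq> S" "S \<inter> A = {\<one>}" "S <#> A = carrier G"
    and "A \<subseteq> center G" "center G \<subseteq> A <#> derived G (carrier G)"
  shows "special_p_group p (G\<lparr>carrier := S\<rparr>)"
proof -
  let ?D = "derived G (carrier G)"
  interpret S: group "G\<lparr>carrier := S\<rparr>" using subgroup_imp_group[OF assms(6)] .
  have Sc: "S \<subseteq> carrier G" using subgroup.subset[OF assms(6)] .
  have sD: "subgroup ?D (G\<lparr>carrier := S\<rparr>)"
    using subgroup_incl[OF derived_is_subgroup[OF subset_refl] assms(6,7)] .
  have derived_S: "derived (G\<lparr>carrier := S\<rparr>) S = ?D"
    using derived_consistent[OF subset_refl assms(6)] derived_eq_if_central_factor[OF assms(6,10,9)]
    by simp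
  have "S \<inter> center G \<subseteq> ?D"
    using inter_set_mult_subset_if_disjoint[OF assms(6,7) _ assms(8)] assms(10,11)
      subgroup.subset[OF center_subgroup] by blast
  then have center_S: "center (G\<lparr>carrier := S\<rparr>) = ?D"
    using center_eq_if_central_factor[OF assms(6,10,9)] assms(4,7) by blast
  have "frattini (G\<lparr>carrier := S\<rparr>) \<subseteq> ?D"
  proof (rule S.frattini_subset_if_elementary_quotient[OF _ assms(3) sD])
    show "finite (carrier (G\<lparr>carrier := S\<rparr>))" using assms(1) Sc finite_subset by auto
    show "derived (G\<lparr>carrier := S\<rparr>) (carrier (G\<lparr>carrier := S\<rparr>)) \<subseteq> ?D" using derived_S by simp
    show "g [^]\<^bsub>G\<lparr>carrier := S\<rparr>\<^esub> p \<in> ?D" if "g \<in> carrier (G\<lparr>carrier := S\<rparr>)" for g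
      using assms(5) that Sc nat_pow_consistent by auto
  qed
  moreover have "?D \<subseteq> frattini (G\<lparr>carrier := S\<rparr>)"
    using S.subset_frattini_if_central_derived[OF sD] center_S derived_S by simp
  moreover have "p_group p (G\<lparr>carrier := S\<rparr>)"
    using card_subgroup_prime_power[OF assms(2,3,6)] assms(1) Sc finite_subset S.is_group
    unfolding p_group_def by auto
  ultimately show ?thesis
    unfolding special_p_group_def commutator_subgroup_def using derived_S center_S by auto
qed

lemma pow_eq_one_if_elementary_abelian_subgroup:
  assumes "elementary_abelian p (G\<lparr>carrier := H\<rparr>)" "x \<in> H"
  shows "x [^] p = \<one>"
  using assms nat_pow_consistent[of x p H] unfolding elementary_abelian_def by simp

lemma pow_mem_derived_if_elementary_abelianization:
  assumes "elementary_abelian p (abelianization G)" "g \<in> carrier G"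
  shows "g [^] p \<in> derived G (carrier G)"
proof -
  let ?D = "derived G (carrier G)"
  have nD: "?D \<lhd> G" using derived_self_is_normal .
  have "?D #> g \<in> carrier (G Mod ?D)" unfolding FactGroup_def RCOSETS_def using assms(2) by auto
  then have "(?D #> g) [^]\<^bsub>G Mod ?D\<^esub> p = \<one>\<^bsub>G Mod ?D\<^esub>"
    using assms(1) unfolding elementary_abelian_def abelianization_def commutator_subgroup_def
      by blast
  moreover have "?D #> (g [^] p) = (?D #> g) [^]\<^bsub>G Mod ?D\<^esub> p"
    using hom_nat_pow[OF normal.r_coset_hom_Mod[OF nD] assms(2) is_group
        normal.factorgroup_is_group[OF nD]] .
  ultimately have "?D #> (g [^] p) = ?D" unfolding FactGroup_def by simp
  then show ?thesis using rcos_self[OF _ derived_is_subgroup[OF subset_refl]] assms(2) by force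
qed

lemma comm_group_if_subset_center:
  assumes "subgroup A G" "A \<subseteq> center G"
  shows "comm_group (G\<lparr>carrier := A\<rparr>)"
proof (rule group.group_comm_groupI)
  show "group (G\<lparr>carrier := A\<rparr>)" using subgroup_imp_group[OF assms(1)] .
  show "x \<otimes>\<^bsub>G\<lparr>carrier := A\<rparr>\<^esub> y = y \<otimes>\<^bsub>G\<lparr>carrier := A\<rparr>\<^esub> x"
    if "x \<in> carrier (G\<lparr>carrier := A\<rparr>)" "y \<in> carrier (G\<lparr>carrier := A\<rparr>)" for x y
    using that assms subgroup.subset[OF assms(1)] unfolding center_def by auto
qed

end

theorem lemma3p2:
  fixes G :: "('a, 'b) monoid_scheme" and p :: nat
  assumes "Factorial_Ring.prime p"
    and "top_group G"
    and "p_group p G"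
    and "elementary_abelian p (G\<lparr>carrier := center G\<rparr>)"
    and "elementary_abelian p (abelianization G)"
  shows "\<exists>S A. S \<lhd> G \<and> A \<lhd> G \<and> S \<inter> A = {\<one>\<^bsub>G\<^esub>} \<and> S <#>\<^bsub>G\<^esub> A = carrier G \<and>
              special_p_group p (G\<lparr>carrier := S\<rparr>) \<and> comm_group (G\<lparr>carrier := A\<rparr>)"
proof -
  interpret group G using assms(2) unfolding top_group_def by blast
  let ?D = "derived G (carrier G)"
  have fin: "finite (carrier G)" using assms(2) unfolding top_group_def by blast
  obtain n where card: "card (carrier G) = p ^ n" using assms(3) unfolding p_group_def by blast
  have DZ: "?D \<subseteq> center G"
    using derived_subset_center_if_top[OF fin card assms(1)] assms(2) unfolding top_group_def
      by blast
  have Z_pow: "\<And>z. z \<in> center G \<Longrightarrow> z [^]\<^bsub>G\<^esub> p = \<one>\<^bsub>G\<^esub>"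
    using pow_eq_one_if_elementary_abelian_subgroup[OF assms(4)] .
  have G_pow: "\<And>g. g \<in> carrier G \<Longrightarrow> g [^]\<^bsub>G\<^esub> p \<in> ?D"
    using pow_mem_derived_if_elementary_abelianization[OF assms(5)] .
  obtain A where sA: "subgroup A G" and AZ: "A \<subseteq> center G" and AD: "A \<inter> ?D = {\<one>\<^bsub>G\<^esub>}"
    and Z_AD: "center G \<subseteq> A <#>\<^bsub>G\<^esub> ?D"
    using exists_central_complement[OF fin assms(1) derived_is_subgroup[OF subset_refl] Z_pow]
      by blast
  obtain S where sS: "subgroup S G" and DS: "?D \<subseteq> S" and SA: "S \<inter> A = {\<one>\<^bsub>G\<^esub>}"
    and SAG: "S <#>\<^bsub>G\<^esub> A = carrier G"
    using exists_complement_containing_derived[OF fin assms(1) G_pow sA AD] by blast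
  have "special_p_group p (G\<lparr>carrier := S\<rparr>)"
    using special_p_group_central_factor[OF fin card assms(1) DZ G_pow sS DS SA SAG AZ Z_AD] .
  then show ?thesis
    using normal_if_derived_subset[OF sS DS] normal_if_subset_center[OF sA AZ] SA SAG
      comm_group_if_subset_center[OF sA AZ] by blast
qed

end
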